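(* Let $\mathbb{K}$ be a field of characteristic zero, let $u,v\in\mathbb{K}$ with $uv\neq 0$, let $a_1,\dots,a_\ell\in\mathbb{K}$, and let $\alpha_1\le\alpha_2\le\dots\le\alpha_\ell$ and $\beta_1,\dots,\beta_\ell$ be nonnegative integers. Let \[P=\sum_{j=1}^{\ell} a_j X^{\alpha_j}(uX+v)^{\beta_j}\in\mathbb{K}[X].\] If $P\neq 0$, then \[\operatorname{val}(P)\le \max_{1\le j\le \ell}\left(\alpha_j+\binom{\ell+1-j}{2}\right).\]
   Context: For a nonzero polynomial $P\in\mathbb{K}[X]$, its valuation $\operatorname{val}(P)$ is the largest integer $v$ such that $X^v$ divides $P$. *)

theory Defs
  imports "HOL-Computational_Algebra.Polynomial"
begin

definition val :: "'a::comm_semiring_1 poly \<Rightarrow> nat" where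
  "val P = (GREATEST v. [:0, 1:] ^ v dvd P)"

end

theory Submission
  imports Defs "Jordan_Normal_Form.Determinant"
begin

(*
  Write f_t = X^alpha_t (uX + v)^beta_t and theta = X d/dX, and for polynomials F_1, ..., F_k
  consider W(F) = det (theta^r F_i). Its valuation is at least the sum of the valuations of
  the F_i, and when these valuations are distinct the coefficient in that degree is the product
  of the lowest coefficients times a Vandermonde determinant, so W(F) is nonzero. For columns
  F_i = f_(t_i), the polynomial (uX + v)^(k choose 2) W(F) is a multiple of
  (uX + v)^(sum beta_(t_i)) of degree at most (k choose 2) + sum (alpha_(t_i) + beta_(t_i));
  since v is nonzero this gives val W(F) <= sum alpha_(t_i) + (k choose 2).

  Now let P be a nonzero element of the span of f_j, ..., f_l. If the span of f_(j+1), ..., f_l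
  contains a nonzero polynomial of valuation at least val P, recurse on it. Otherwise reduce
  f_(j+1), ..., f_l to a spanning family g_1, ..., g_r with distinct valuations, all below
  val P, built from r of the f_t. Then W(P, g) is nonzero and, up to nonzero scalars, equal to
  W(P, f_(t_1), ...) and to W(f_j, f_(t_1), ...). Comparing the two bounds on the valuation
  gives val P <= alpha_j + (r + 1 choose 2) <= alpha_j + (l + 1 - j choose 2).
*)

(* HOL-Algebra, loaded by the determinant library, has its own smult. *)
hide_const (open) Module.module.smult

section \<open>Valuation at zero\<close>

lemma pX_power_eq_monom: "[:0, 1:] ^ n = (monom 1 n :: 'a::comm_semiring_1 poly)"
  by (simp add: monom_altdef)

lemma le_order_0_iff: "p \<noteq> 0 \<Longrightarrow> n \<le> order 0 p \<longleftrightarrow> (\<forall>k<n. coeff p k = 0)"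
  by (simp add: monom_1_dvd_iff' flip: monom_1_dvd_iff)

lemma coeff_less_order_0: "k < order 0 p \<Longrightarrow> coeff p k = 0"
  using le_order_0_iff[of p "order 0 p"] by (cases "p = 0") auto

lemma coeff_order_0_nonzero: "p \<noteq> 0 \<Longrightarrow> coeff p (order 0 p) \<noteq> 0"
  using le_order_0_iff[of p "Suc (order 0 p)"] coeff_less_order_0[of _ p]
  by (auto simp: less_Suc_eq)

lemma monom_order_0_dvd: "monom 1 (order 0 p) dvd p"
  by (cases "p = 0") (simp_all add: monom_1_dvd_iff)

lemma val_eq_order_0: "p \<noteq> 0 \<Longrightarrow> val p = order 0 p"
  unfolding val_def pX_power_eq_monom by (rule Greatest_equality) (simp_all add: monom_1_dvd_iff)

lemma order_0_pX_power_mult: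
  fixes q :: "'a::idom poly"
  assumes "poly q 0 \<noteq> 0"
  shows "order 0 ([:0, 1:] ^ n * q) = n"
proof -
  have "q \<noteq> 0" using assms by auto
  then show ?thesis
    using order_power_n_n[of "0::'a" n] order_0I[OF assms] by (simp add: order_mult)
qed

section \<open>The Euler operator\<close>

definition euler_op :: "'a::{comm_semiring_1,semiring_no_zero_divisors} poly \<Rightarrow> 'a poly" where
  "euler_op p = [:0, 1:] * pderiv p"

lemma coeff_euler_op: "coeff (euler_op p) n = of_nat n * coeff p n"
  by (cases n) (simp_all add: euler_op_def coeff_pderiv)

lemma coeff_euler_op_power: "coeff ((euler_op ^^ r) p) n = of_nat n ^ r * coeff p n"
  by (induction r) (simp_all add: coeff_euler_op mult.assoc)

lemma euler_op_power_smult: "(euler_op ^^ r) (smult c p) = smult c ((euler_op ^^ r) p)"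
  by (rule poly_eqI) (simp add: coeff_euler_op_power mult.left_commute)

lemma euler_op_power_sum: "(euler_op ^^ r) (\<Sum>x\<in>A. f x) = (\<Sum>x\<in>A. (euler_op ^^ r) (f x))"
  by (rule poly_eqI) (simp add: coeff_euler_op_power coeff_sum sum_distrib_left)

lemma monom_dvd_euler_op_power: "monom 1 n dvd p \<Longrightarrow> monom 1 n dvd (euler_op ^^ r) p"
  by (simp add: monom_1_dvd_iff' coeff_euler_op_power)

lemma degree_euler_op_power_le: "degree ((euler_op ^^ r) p) \<le> degree p"
  by (rule degree_le) (simp add: coeff_euler_op_power coeff_eq_0)

lemma power_dvd_pderiv:
  fixes q p :: "'a::{comm_semiring_1,semiring_no_zero_divisors} poly"
  assumes "q ^ m dvd p" shows "q ^ (m - 1) dvd pderiv p"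
proof (cases m)
  case (Suc m')
  obtain h where h: "p = q ^ Suc m' * h"
    using assms Suc by (auto simp: dvd_def)
  have "pderiv p = q ^ Suc m' * pderiv h + h * (smult (of_nat (Suc m')) (q ^ m') * pderiv q)"
    by (simp only: h pderiv_mult pderiv_power_Suc)
  also have "\<dots> = q ^ m' * (q * pderiv h + smult (of_nat (Suc m')) (h * pderiv q))"
    by (simp add: algebra_simps)
  finally show ?thesis
    using Suc by simp
qed simp

lemma power_dvd_euler_op_power:
  assumes "q ^ m dvd p" shows "q ^ (m - r) dvd (euler_op ^^ r) p"
proof (induction r)
  case (Suc r)
  have "q ^ (m - r - 1) dvd [:0, 1:] * pderiv ((euler_op ^^ r) p)"
    using power_dvd_pderiv[OF Suc.IH] by (rule dvd_mult)
  moreover have "m - Suc r = m - r - 1" by simp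
  ultimately show ?case by (simp only: funpow.simps o_apply euler_op_def[of "(euler_op ^^ r) p"])
qed (simp add: assms)

section \<open>Wronskians of the Euler operator\<close>

lemma det_mat_leibniz:
  "det (mat k k f) = (\<Sum>p | p permutes {..<k}. of_int (sign p) * (\<Prod>r<k. f (r, p r)))"
proof -
  have "det (mat k k f) =
      (\<Sum>p | p permutes {0..<k}. of_int (sign p) * (\<Prod>r = 0..<k. mat k k f $$ (r, p r)))"
    by (rule det_def') simp
  also have "\<dots> = (\<Sum>p | p permutes {..<k}. of_int (sign p) * (\<Prod>r<k. f (r, p r)))"
    by (intro sum.cong arg_cong2[where f = "(*)"] prod.cong)
      (auto simp: permutes_in_image atLeast0LessThan)
  finally show ?thesis .
qed

lemma permutes_lessThan_less: "p permutes {..<k} \<Longrightarrow> r < k \<Longrightarrow> p r < k"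
  using permutes_in_image[of p "{..<k}" r] by simp

lemma sum_permutes_lessThan: "p permutes {..<k} \<Longrightarrow> (\<Sum>r<k. f (p r)) = (\<Sum>i<k. f i)"
  using sum.permute[of p "{..<k}" f] by (simp add: o_def)

lemma prod_permutes_lessThan: "p permutes {..<k} \<Longrightarrow> (\<Prod>r<k. f (p r)) = (\<Prod>i<k. f i)"
  using prod.permute[of p "{..<k}" f] by (simp add: o_def)

(* Using X d/dX instead of d/dX makes the coefficient of the Wronskian in the degree
   given by the sum of the valuations a Vandermonde determinant. *)
definition euler_wronskian :: "'a::idom poly list \<Rightarrow> 'a poly" where
  "euler_wronskian fs = det (mat (length fs) (length fs) (\<lambda>(r, i). (euler_op ^^ r) (fs ! i)))"

lemma euler_wronskian_expansion:
  "euler_wronskian fs = (\<Sum>p | p permutes {..<length fs}.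
     of_int (sign p) * (\<Prod>r<length fs. (euler_op ^^ r) (fs ! p r)))"
  by (simp add: euler_wronskian_def det_mat_leibniz)

lemma prod_monom_1: "(\<Prod>i\<in>A. monom 1 (n i)) = (monom 1 (\<Sum>i\<in>A. n i) :: 'a::comm_semiring_1 poly)"
  by (simp add: power_sum flip: pX_power_eq_monom)

lemma coeff_prod_at_sum:
  fixes h :: "'i \<Rightarrow> 'a::comm_semiring_1 poly"
  assumes "\<forall>i\<in>A. monom 1 (n i) dvd h i"
  shows "coeff (\<Prod>i\<in>A. h i) (\<Sum>i\<in>A. n i) = (\<Prod>i\<in>A. coeff (h i) (n i))"
proof -
  obtain g where g: "\<forall>i\<in>A. h i = monom 1 (n i) * g i"
    using bchoice[OF assms[unfolded dvd_def]] by blast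
  have "(\<Prod>i\<in>A. h i) = monom 1 (\<Sum>i\<in>A. n i) * (\<Prod>i\<in>A. g i)"
    by (simp add: g prod.distrib prod_monom_1 cong: prod.cong)
  then have "coeff (\<Prod>i\<in>A. h i) (\<Sum>i\<in>A. n i) = coeff (\<Prod>i\<in>A. g i) 0"
    by (simp add: coeff_monom_mult)
  also have "\<dots> = (\<Prod>i\<in>A. coeff (g i) 0)"
    by (simp only: poly_prod flip: poly_0_coeff_0)
  also have "\<dots> = (\<Prod>i\<in>A. coeff (h i) (n i))"
    by (rule prod.cong) (simp_all add: g coeff_monom_mult)
  finally show ?thesis .
qed

lemma monom_dvd_euler_wronskian:
  assumes "\<forall>i<length fs. monom 1 (n i) dvd fs ! i"
  shows "monom 1 (\<Sum>i<length fs. n i) dvd euler_wronskian fs"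
  unfolding euler_wronskian_expansion
proof (intro dvd_sum dvd_mult)
  fix p assume p: "p \<in> {p. p permutes {..<length fs}}"
  then have "monom 1 (\<Sum>i<length fs. n i) = (\<Prod>r<length fs. monom 1 (n (p r)))"
    by (simp add: prod_monom_1 sum_permutes_lessThan[of p _ n])
  also have "\<dots> dvd (\<Prod>r<length fs. (euler_op ^^ r) (fs ! p r))"
    using p assms
    by (intro prod_dvd_prod monom_dvd_euler_op_power) (simp add: permutes_lessThan_less)
  finally show "monom 1 (\<Sum>i<length fs. n i) dvd (\<Prod>r<length fs. (euler_op ^^ r) (fs ! p r))" .
qed

lemma coeff_euler_wronskian:
  assumes "\<forall>i<length fs. monom 1 (n i) dvd fs ! i"
  shows "coeff (euler_wronskian fs) (\<Sum>i<length fs. n i) =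
    (\<Prod>i<length fs. coeff (fs ! i) (n i)) *
    det (mat (length fs) (length fs) (\<lambda>(r, i). of_nat (n i) ^ r))"
proof -
  let ?k = "length fs"
  have "coeff (\<Prod>r<?k. (euler_op ^^ r) (fs ! p r)) (\<Sum>i<?k. n i) =
      (\<Prod>r<?k. of_nat (n (p r)) ^ r) * (\<Prod>i<?k. coeff (fs ! i) (n i))"
    if p: "p permutes {..<?k}" for p
  proof -
    have "coeff (\<Prod>r<?k. (euler_op ^^ r) (fs ! p r)) (\<Sum>r<?k. n (p r)) =
        (\<Prod>r<?k. coeff ((euler_op ^^ r) (fs ! p r)) (n (p r)))"
      using p assms by (intro coeff_prod_at_sum ballI monom_dvd_euler_op_power)
        (auto simp: permutes_lessThan_less)
    also have "\<dots> = (\<Prod>r<?k. of_nat (n (p r)) ^ r) * (\<Prod>r<?k. coeff (fs ! p r) (n (p r)))"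
      by (simp add: coeff_euler_op_power prod.distrib)
    finally show ?thesis
      using prod_permutes_lessThan[OF p, of "\<lambda>i. coeff (fs ! i) (n i)"]
        sum_permutes_lessThan[OF p, of n] by simp
  qed
  then show ?thesis
    unfolding euler_wronskian_expansion det_mat_leibniz coeff_sum sum_distrib_left
    by (intro sum.cong refl) (auto simp: of_int_poly mult_ac)
qed

lemma det_vandermonde_nonzero:
  fixes x :: "nat \<Rightarrow> 'a::field"
  assumes "inj_on x {..<k}"
  shows "det (mat k k (\<lambda>(r, i). x i ^ r)) \<noteq> 0"
proof
  let ?M = "mat k k (\<lambda>(r, i). x i ^ r)"
  assume "det ?M = 0"
  then have "det (transpose_mat ?M) = 0"
    using det_transpose[of ?M k] by simp
  then obtain w where w: "w \<in> carrier_vec k" "w \<noteq> 0\<^sub>v k" "transpose_mat ?M *\<^sub>v w = 0\<^sub>v k"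
    using det_0_iff_vec_prod_zero_field[of "transpose_mat ?M" k] by auto
  define q where "q = (\<Sum>r<k. monom (w $ r) r)"
  have coeff_q: "coeff q r = (if r < k then w $ r else 0)" for r
    by (simp add: q_def coeff_sum)
  obtain r where "r < k" "w $ r \<noteq> 0"
    using w(1,2) by (metis carrier_vecD eq_vecI index_zero_vec)
  then have "q \<noteq> 0" and "0 < k"
    using coeff_q[of r] by auto
  have "poly q (x i) = 0" if "i < k" for i
  proof -
    have "poly q (x i) = (\<Sum>r<k. x i ^ r * w $ r)"
      by (simp add: q_def poly_sum poly_monom mult.commute)
    also have "\<dots> = (transpose_mat ?M *\<^sub>v w) $ i"
      using that w(1) by (simp add: scalar_prod_def lessThan_atLeast0)
    finally show ?thesis
      using w(3) that by simp
  qed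
  then have "x ` {..<k} \<subseteq> {z. poly q z = 0}"
    by auto
  then have "card (x ` {..<k}) \<le> card {z. poly q z = 0}"
    by (intro card_mono poly_roots_finite \<open>q \<noteq> 0\<close>)
  then have "k \<le> card {z. poly q z = 0}"
    by (simp add: card_image[OF assms])
  also have "\<dots> \<le> degree q"
    using card_poly_roots_bound[OF \<open>q \<noteq> 0\<close>] .
  also have "degree q < k"
    using \<open>0 < k\<close> by (intro degree_lessI) (auto simp: coeff_q \<open>q \<noteq> 0\<close>)
  finally show False
    by simp
qed

lemma euler_wronskian_nonzero:
  fixes fs :: "'a::field_char_0 poly list"
  assumes "0 \<notin> set fs" and "distinct (map (order 0) fs)"
  shows "euler_wronskian fs \<noteq> 0"
proof -
  let ?n = "\<lambda>i. order 0 (fs ! i)"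
  have "(\<Prod>i<length fs. coeff (fs ! i) (?n i)) \<noteq> 0"
    using assms(1) coeff_order_0_nonzero by (fastforce simp: in_set_conv_nth)
  moreover have "inj_on (\<lambda>i. of_nat (?n i) :: 'a) {..<length fs}"
    using assms(2) by (auto simp: inj_on_def distinct_conv_nth)
  ultimately have "coeff (euler_wronskian fs) (\<Sum>i<length fs. ?n i) \<noteq> 0"
    by (simp add: coeff_euler_wronskian monom_order_0_dvd det_vandermonde_nonzero)
  then show ?thesis
    by auto
qed

interpretation poly_vs: vector_space "smult :: 'a::field \<Rightarrow> 'a poly \<Rightarrow> 'a poly"
  by unfold_locales (simp_all add: smult_add_right smult_add_left)

(* Provides the simp rule det (map_mat (\<lambda>x. [:x:]) A) = [:det A:]. *)
interpretation const_poly_hom: comm_ring_hom "\<lambda>x::'a::comm_ring_1. [:x:]"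
  by unfold_locales (simp_all add: mult.commute)

lemma in_span_set_nth_combination:
  assumes "x \<in> poly_vs.span (set hs)"
  shows "\<exists>c. x = (\<Sum>q<length hs. smult (c q) (hs ! q))"
proof -
  let ?C = "{x. \<exists>c. x = (\<Sum>q<length hs. smult (c q) (hs ! q))}"
  have "poly_vs.subspace ?C"
    unfolding poly_vs.subspace_def
  proof (intro conjI ballI allI)
    show "0 \<in> ?C"
      by (auto intro: exI[of _ "\<lambda>_. 0"])
    fix x y c assume "x \<in> ?C" "y \<in> ?C"
    then obtain a b where "x = (\<Sum>q<length hs. smult (a q) (hs ! q))"
      and "y = (\<Sum>q<length hs. smult (b q) (hs ! q))"
      by blast
    then show "x + y \<in> ?C" and "smult c x \<in> ?C"
      by (auto simp: sum.distrib smult_add_left intro: exI[of _ "\<lambda>q. a q + b q"])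
        (auto simp: poly_vs.scale_sum_right intro: exI[of _ "\<lambda>q. c * a q"])
  qed
  moreover have "set hs \<subseteq> ?C"
  proof
    fix h assume "h \<in> set hs"
    then obtain i where "i < length hs" "h = hs ! i"
      by (auto simp: in_set_conv_nth)
    then show "h \<in> ?C"
      by (auto simp: if_distrib[of "\<lambda>c. smult c _"] cong: if_cong
          intro!: exI[of _ "\<lambda>q. if q = i then 1 else 0"])
  qed
  ultimately show ?thesis
    using poly_vs.span_minimal assms by blast
qed

lemma euler_wronskian_change_of_basis:
  fixes fs hs :: "'a::field poly list"
  assumes "length fs = length hs" and "set fs \<subseteq> poly_vs.span (set hs)"
  shows "\<exists>c. euler_wronskian fs = smult c (euler_wronskian hs)"
proof -
  let ?k = "length hs"
  have "\<forall>i. \<exists>c. i < ?k \<longrightarrow> fs ! i = (\<Sum>q<?k. smult (c q) (hs ! q))"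
    using assms in_span_set_nth_combination nth_mem by (metis subsetD)
  then obtain B where B: "\<forall>i<?k. fs ! i = (\<Sum>q<?k. smult (B i q) (hs ! q))"
    by metis
  define MH where "MH = mat ?k ?k (\<lambda>(r, q). (euler_op ^^ r) (hs ! q))"
  define MB where "MB = mat ?k ?k (\<lambda>(q, i). B i q)"
  let ?MB' = "map_mat (\<lambda>x. [:x:]) MB"
  have "mat ?k ?k (\<lambda>(r, i). (euler_op ^^ r) (fs ! i)) = MH * ?MB'"
  proof (rule eq_matI)
    fix r i assume "r < dim_row (MH * ?MB')" "i < dim_col (MH * ?MB')"
    then have r: "r < ?k" and i: "i < ?k"
      by (simp_all add: MH_def MB_def)
    then have "(MH * ?MB') $$ (r, i) = (\<Sum>q<?k. (euler_op ^^ r) (hs ! q) * [:B i q:])"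
      by (simp add: MH_def MB_def scalar_prod_def lessThan_atLeast0)
    also have "\<dots> = (euler_op ^^ r) (fs ! i)"
      using B i by (simp add: euler_op_power_sum euler_op_power_smult)
    finally show "mat ?k ?k (\<lambda>(r, i). (euler_op ^^ r) (fs ! i)) $$ (r, i) = (MH * ?MB') $$ (r, i)"
      using r i by simp
  qed (simp_all add: MH_def MB_def)
  moreover have "MH \<in> carrier_mat ?k ?k" and "?MB' \<in> carrier_mat ?k ?k"
    by (simp_all add: MH_def MB_def)
  ultimately have "euler_wronskian fs = det MH * [:det MB:]"
    using assms(1) by (simp add: euler_wronskian_def det_mult)
  then show ?thesis
    by (auto simp: euler_wronskian_def MH_def)
qed

lemma sum_order_0_le_order_0_euler_wronskian:
  assumes "euler_wronskian fs \<noteq> 0"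
  shows "sum_list (map (order 0) fs) \<le> order 0 (euler_wronskian fs)"
proof -
  have "monom 1 (\<Sum>i<length fs. order 0 (fs ! i)) dvd euler_wronskian fs"
    by (intro monom_dvd_euler_wronskian allI impI monom_order_0_dvd)
  then show ?thesis
    using assms by (simp add: monom_1_dvd_iff sum_list_sum_nth lessThan_atLeast0)
qed

lemma power_dvd_power_mult_euler_op_power:
  assumes "q ^ b dvd p"
  shows "q ^ b dvd q ^ r * (euler_op ^^ r) p"
proof -
  have "q ^ b dvd q ^ r * q ^ (b - r)"
    by (simp add: le_imp_power_dvd flip: power_add)
  also have "\<dots> dvd q ^ r * (euler_op ^^ r) p"
    using power_dvd_euler_op_power[OF assms] by (rule mult_dvd_mono[OF dvd_refl])
  finally show ?thesis .
qed

lemma degree_power_mult_euler_op_power_le: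
  assumes "degree q \<le> 1"
  shows "degree (q ^ r * (euler_op ^^ r) p) \<le> r + degree p"
proof -
  have "degree (q ^ r) \<le> r"
    using degree_power_le[of q r] assms by (simp add: order_trans)
  then show ?thesis
    using degree_mult_le[of "q ^ r" "(euler_op ^^ r) p"] degree_euler_op_power_le[of r p]
    by linarith
qed

lemma sum_lessThan_eq_choose_two: "(\<Sum>r<k. r) = k choose 2"
  by (simp add: lessThan_atLeast0 Sum_Ico_nat choose_two mult.commute)

lemma euler_wronskian_scaled_expansion:
  "g ^ (length fs choose 2) * euler_wronskian fs =
    (\<Sum>p | p permutes {..<length fs}.
       of_int (sign p) * (\<Prod>r<length fs. g ^ r * (euler_op ^^ r) (fs ! p r)))"
proof -
  have "g ^ (length fs choose 2) = (\<Prod>r<length fs. g ^ r)"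
    by (simp add: power_sum flip: sum_lessThan_eq_choose_two)
  then show ?thesis
    unfolding euler_wronskian_expansion sum_distrib_left
    by (intro sum.cong refl) (simp add: prod.distrib mult.left_commute)
qed

lemma power_dvd_scaled_euler_wronskian:
  assumes "\<forall>i<length fs. \<forall>r. g ^ b i dvd g ^ r * (euler_op ^^ r) (fs ! i)"
  shows "g ^ (\<Sum>i<length fs. b i) dvd g ^ (length fs choose 2) * euler_wronskian fs"
  unfolding euler_wronskian_scaled_expansion
proof (intro dvd_sum dvd_mult)
  fix p assume p: "p \<in> {p. p permutes {..<length fs}}"
  then have "g ^ (\<Sum>i<length fs. b i) = (\<Prod>r<length fs. g ^ b (p r))"
    by (simp add: power_sum prod_permutes_lessThan[of p _ "\<lambda>i. g ^ b i"])
  also have "\<dots> dvd (\<Prod>r<length fs. g ^ r * (euler_op ^^ r) (fs ! p r))"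
    using p assms by (intro prod_dvd_prod) (simp add: permutes_lessThan_less)
  finally show "g ^ (\<Sum>i<length fs. b i) dvd (\<Prod>r<length fs. g ^ r * (euler_op ^^ r) (fs ! p r))" .
qed

lemma degree_scaled_euler_wronskian_le:
  assumes "\<forall>i<length fs. \<forall>r. degree (g ^ r * (euler_op ^^ r) (fs ! i)) \<le> r + d i"
  shows "degree (g ^ (length fs choose 2) * euler_wronskian fs) \<le>
    (length fs choose 2) + (\<Sum>i<length fs. d i)"
  unfolding euler_wronskian_scaled_expansion
proof (intro degree_sum_le)
  fix p assume p: "p \<in> {p. p permutes {..<length fs}}"
  let ?T = "\<Prod>r<length fs. g ^ r * (euler_op ^^ r) (fs ! p r)"
  have "degree (of_int (sign p) * ?T) \<le> degree ?T"
    using degree_mult_le[of "of_int (sign p)" ?T] by (simp only: degree_of_int add_0)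
  also have "\<dots> \<le> (\<Sum>r<length fs. degree (g ^ r * (euler_op ^^ r) (fs ! p r)))"
    using degree_prod_sum_le[of "{..<length fs}"] by (simp add: o_def)
  also have "\<dots> \<le> (\<Sum>r<length fs. r + d (p r))"
    using p assms by (intro sum_mono) (simp add: permutes_lessThan_less)
  also have "\<dots> = (length fs choose 2) + (\<Sum>i<length fs. d i)"
    using p by (simp add: sum.distrib sum_permutes_lessThan[of p _ d] sum_lessThan_eq_choose_two)
  finally show "degree (of_int (sign p) * ?T) \<le> (length fs choose 2) + (\<Sum>i<length fs. d i)" .
qed (simp add: finite_permutations)

lemma order_0_le_of_power_dvd:
  fixes q p :: "'a::idom poly"
  assumes "poly q 0 \<noteq> 0" and "p \<noteq> 0"
    and "q ^ s dvd q ^ c * p" and "degree (q ^ c * p) \<le> n + s * degree q"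
  shows "order 0 p \<le> n"
proof -
  have q: "poly (q ^ m) 0 \<noteq> 0" for m
    using assms(1) by simp
  have "q \<noteq> 0"
    using assms(1) by auto
  have order_mult_q: "order 0 (q ^ m * x) = order 0 x" if "x \<noteq> 0" for m x
    using that q[of m] order_mult[of "q ^ m" x 0] order_0I[OF q[of m]] by auto
  obtain D where D: "q ^ c * p = q ^ s * D"
    using assms(3) by (elim dvdE)
  then have "D \<noteq> 0"
    using assms(2) q[of c] by auto
  have "order 0 p = order 0 D"
    using order_mult_q[OF assms(2), of c] order_mult_q[OF \<open>D \<noteq> 0\<close>, of s] D by simp
  also have "\<dots> \<le> degree D"
    using order_degree[OF \<open>D \<noteq> 0\<close>] .
  also have "\<dots> \<le> n"
    using assms(4) D \<open>D \<noteq> 0\<close> \<open>q \<noteq> 0\<close> by (simp add: degree_mult_eq degree_power_eq)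
  finally show ?thesis .
qed

lemma degree_pX_power_mult_power_le:
  fixes u v :: "'a::idom"
  shows "degree ([:0, 1:] ^ a * [:v, u:] ^ b) \<le> a + b"
proof -
  have "degree ([:0, 1:] ^ a :: 'a::idom poly) \<le> a" and "degree ([:v, u:] ^ b) \<le> b"
    using degree_power_le[of "[:0, 1:] :: 'a poly" a] degree_power_le[of "[:v, u:]" b]
    by (simp_all add: order_trans)
  then show ?thesis
    using degree_mult_le[of "[:0, 1:] ^ a" "[:v, u:] ^ b"] by linarith
qed

lemma order_0_euler_wronskian_le:
  fixes u v :: "'a::idom" and \<alpha> \<beta> :: "'i \<Rightarrow> nat" and ts :: "'i list"
  defines "fs \<equiv> map (\<lambda>t. [:0, 1:] ^ \<alpha> t * [:v, u:] ^ \<beta> t) ts"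
  assumes u: "u \<noteq> 0" and v: "v \<noteq> 0"
    and nonzero: "euler_wronskian fs \<noteq> 0"
  shows "order 0 (euler_wronskian fs) \<le> sum_list (map \<alpha> ts) + (length ts choose 2)"
proof -
  define a where "a i = \<alpha> (ts ! i)" for i
  define b where "b i = \<beta> (ts ! i)" for i
  let ?Q = "[:v, u:]" and ?k = "length fs"
  have "degree ?Q = 1"
    using u by simp
  have columns: "\<forall>i<?k. fs ! i = [:0, 1:] ^ a i * ?Q ^ b i"
    by (simp add: fs_def a_def b_def)
  have dvd: "?Q ^ (\<Sum>i<?k. b i) dvd ?Q ^ (?k choose 2) * euler_wronskian fs"
  proof (rule power_dvd_scaled_euler_wronskian, intro allI impI)
    fix i r assume "i < ?k"
    then show "?Q ^ b i dvd ?Q ^ r * (euler_op ^^ r) (fs ! i)"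
      using columns by (intro power_dvd_power_mult_euler_op_power) simp
  qed
  have "degree (?Q ^ (?k choose 2) * euler_wronskian fs) \<le> (?k choose 2) + (\<Sum>i<?k. a i + b i)"
  proof (rule degree_scaled_euler_wronskian_le, intro allI impI)
    fix i r assume "i < ?k"
    then have "degree (fs ! i) \<le> a i + b i"
      using columns degree_pX_power_mult_power_le by metis
    then show "degree (?Q ^ r * (euler_op ^^ r) (fs ! i)) \<le> r + (a i + b i)"
      using degree_power_mult_euler_op_power_le[of ?Q r "fs ! i"] \<open>degree ?Q = 1\<close> by simp
  qed
  then have "degree (?Q ^ (?k choose 2) * euler_wronskian fs) \<le>
      (\<Sum>i<?k. a i) + (?k choose 2) + (\<Sum>i<?k. b i) * degree ?Q"
    unfolding \<open>degree ?Q = 1\<close> by (simp add: sum.distrib)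
  moreover have "poly ?Q 0 \<noteq> 0"
    using v by simp
  ultimately have "order 0 (euler_wronskian fs) \<le> (\<Sum>i<?k. a i) + (?k choose 2)"
    using nonzero dvd by (intro order_0_le_of_power_dvd)
  moreover have "sum_list (map \<alpha> ts) = (\<Sum>i<?k. a i)"
    by (simp add: fs_def a_def sum_list_sum_nth lessThan_atLeast0)
  ultimately show ?thesis
    by (simp add: fs_def)
qed

section \<open>Spanning families with distinct valuations\<close>

lemma translate_by_span_avoids_orders:
  fixes f :: "'a::field poly"
  assumes "finite G" and "0 \<notin> G"
  shows "\<exists>h. f - h \<in> poly_vs.span G \<and> (h = 0 \<or> order 0 h \<notin> order 0 ` G)"
proof (rule ccontr)
  assume contra: "\<not> ?thesis"
  let ?H = "{h. f - h \<in> poly_vs.span G}"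
  have bad: "h \<noteq> 0 \<and> order 0 h \<in> order 0 ` G" if "h \<in> ?H" for h
    using contra that by blast
  have "order 0 h < Suc (\<Sum>g\<in>G. degree g)" if h: "h \<in> ?H" for h
  proof -
    obtain g where "g \<in> G" and "order 0 h = order 0 g"
      using bad[OF h] by auto
    moreover have "order 0 g \<le> degree g"
      using \<open>g \<in> G\<close> assms(2) by (intro order_degree) auto
    ultimately show ?thesis
      using member_le_sum[OF \<open>g \<in> G\<close> _ assms(1), of degree] by simp
  qed
  moreover have "f \<in> ?H"
    by (simp add: poly_vs.span_zero)
  ultimately obtain h where "h \<in> ?H" and h_max: "\<forall>h'\<in>?H. order 0 h' \<le> order 0 h"
    using Lattices_Big.ex_has_greatest_nat[of "\<lambda>h. h \<in> ?H" f "order 0"] by blast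
  then obtain g where "g \<in> G" and g: "order 0 g = order 0 h"
    using bad by force
  define n where "n = order 0 h"
  define c where "c = coeff h n / coeff g n"
  define h' where "h' = h - smult c g"
  have "g \<noteq> 0"
    using \<open>g \<in> G\<close> assms(2) by auto
  then have "coeff g n \<noteq> 0"
    using coeff_order_0_nonzero[of g] g by (simp add: n_def)
  have "f - h' = (f - h) + smult c g"
    by (simp add: h'_def)
  also have "\<dots> \<in> poly_vs.span G"
    using \<open>h \<in> ?H\<close> \<open>g \<in> G\<close> by (simp add: poly_vs.span_add poly_vs.span_scale poly_vs.span_base)
  finally have "h' \<in> ?H"
    by simp
  have "coeff h' k = 0" if "k < Suc n" for k
  proof (cases "k = n")
    case False
    then have "k < order 0 h" and "k < order 0 g"
      using that g by (simp_all add: n_def)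
    then show ?thesis
      by (simp add: h'_def coeff_less_order_0)
  qed (simp add: h'_def c_def \<open>coeff g n \<noteq> 0\<close>)
  moreover have "h' \<noteq> 0"
    using bad[OF \<open>h' \<in> ?H\<close>] by simp
  ultimately have "Suc n \<le> order 0 h'"
    by (simp add: le_order_0_iff)
  moreover have "order 0 h' \<le> n"
    using h_max \<open>h' \<in> ?H\<close> by (simp add: n_def)
  ultimately show False
    by simp
qed

lemma span_subset_span: "A \<subseteq> poly_vs.span B \<Longrightarrow> poly_vs.span A \<subseteq> poly_vs.span B"
  by (rule poly_vs.span_minimal[OF _ poly_vs.subspace_span])

lemma exists_distinct_order_basis:
  fixes f :: "'i \<Rightarrow> 'a::field poly"
  shows "\<exists>gs es. length gs = length es \<and> length es \<le> length ts \<and> set es \<subseteq> set ts \<and>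
    0 \<notin> set gs \<and> distinct (map (order 0) gs) \<and>
    set gs \<subseteq> poly_vs.span (f ` set es) \<and> f ` set ts \<subseteq> poly_vs.span (set gs)"
proof (induction ts)
  case (Cons t ts)
  then obtain gs es where "length gs = length es" "length es \<le> length ts" "set es \<subseteq> set ts"
    and gs: "0 \<notin> set gs" "distinct (map (order 0) gs)"
    and gs_span: "set gs \<subseteq> poly_vs.span (f ` set es)"
    and ts_span: "f ` set ts \<subseteq> poly_vs.span (set gs)"
    by blast
  obtain h where h: "f t - h \<in> poly_vs.span (set gs)" "h = 0 \<or> order 0 h \<notin> order 0 ` set gs"
    using translate_by_span_avoids_orders[of "set gs" "f t"] gs(1) by blast
  show ?case
  proof (cases "h = 0")
    case True
    then show ?thesis
      using h(1) \<open>length gs = length es\<close> \<open>length es \<le> length ts\<close> \<open>set es \<subseteq> set ts\<close>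
        gs gs_span ts_span
      by (intro exI[of _ gs] exI[of _ es]) auto
  next
    case False
    have span_gs: "poly_vs.span (set gs) \<subseteq> poly_vs.span (f ` set (t # es))"
      using gs_span by (intro span_subset_span) (auto intro: poly_vs.span_mono[THEN subsetD])
    have "f t - h \<in> poly_vs.span (f ` set (t # es))"
      using span_gs h(1) by blast
    then have "f t - (f t - h) \<in> poly_vs.span (f ` set (t # es))"
      by (rule poly_vs.span_diff[OF poly_vs.span_base, rotated]) simp
    then have h_span: "h \<in> poly_vs.span (f ` set (t # es))"
      by simp
    have "f t - h \<in> poly_vs.span (set (h # gs))"
      using h(1) poly_vs.span_mono[of "set gs" "set (h # gs)"] by auto
    then have "h + (f t - h) \<in> poly_vs.span (set (h # gs))"
      by (rule poly_vs.span_add[OF poly_vs.span_base, rotated]) simp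
    then have "f t \<in> poly_vs.span (set (h # gs))"
      by simp
    moreover have "f ` set ts \<subseteq> poly_vs.span (set (h # gs))"
      using ts_span poly_vs.span_mono[of "set gs" "set (h # gs)"] by auto
    moreover have "set gs \<subseteq> poly_vs.span (f ` set (t # es))"
      using gs_span poly_vs.span_mono[of "f ` set es" "f ` set (t # es)"] by auto
    ultimately show ?thesis
      using False h(2) h_span gs \<open>length gs = length es\<close> \<open>length es \<le> length ts\<close>
        \<open>set es \<subseteq> set ts\<close>
      by (intro exI[of _ "h # gs"] exI[of _ "t # es"]) auto
  qed
qed simp

lemma exists_subfamily_with_nonzero_euler_wronskian:
  fixes f :: "'i \<Rightarrow> 'a::field_char_0 poly"
  assumes "finite T" and "P \<noteq> 0"
    and smaller: "\<forall>R \<in> poly_vs.span (f ` T). R \<noteq> 0 \<longrightarrow> order 0 R < order 0 P"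
  obtains es where "set es \<subseteq> T" and "length es \<le> card T"
    and "f ` T \<subseteq> poly_vs.span (f ` set es)" and "euler_wronskian (P # map f es) \<noteq> 0"
proof -
  obtain ts where ts: "set ts = T" "distinct ts"
    using finite_distinct_list[OF \<open>finite T\<close>] by blast
  obtain gs es where len: "length gs = length es" "length es \<le> length ts" and "set es \<subseteq> T"
    and gs: "0 \<notin> set gs" "distinct (map (order 0) gs)"
    and gs_span: "set gs \<subseteq> poly_vs.span (f ` set es)"
    and T_span: "f ` T \<subseteq> poly_vs.span (set gs)"
    using exists_distinct_order_basis[where f = f and ts = ts] ts(1) by blast
  have "poly_vs.span (f ` set es) \<subseteq> poly_vs.span (f ` T)"
    using \<open>set es \<subseteq> T\<close> by (intro poly_vs.span_mono) auto
  then have "set gs \<subseteq> poly_vs.span (f ` T)"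
    using gs_span by (rule subset_trans[rotated])
  then have "order 0 g < order 0 P" if "g \<in> set gs" for g
    using smaller gs(1) that by auto
  then have "order 0 P \<notin> order 0 ` set gs"
    by force
  then have "euler_wronskian (P # gs) \<noteq> 0"
    using assms(2) gs by (intro euler_wronskian_nonzero) simp_all
  moreover have "set (P # gs) \<subseteq> poly_vs.span (set (P # map f es))"
  proof -
    have "poly_vs.span (f ` set es) \<subseteq> poly_vs.span (set (P # map f es))"
      by (intro poly_vs.span_mono) auto
    then show ?thesis
      using gs_span by (simp add: poly_vs.span_base)
  qed
  ultimately have "euler_wronskian (P # map f es) \<noteq> 0"
    using euler_wronskian_change_of_basis[of "P # gs" "P # map f es"] len(1) by auto
  moreover have "f ` T \<subseteq> poly_vs.span (f ` set es)"
    using T_span span_subset_span[OF gs_span] by blast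
  moreover have "length es \<le> card T"
    using len(2) distinct_card[OF ts(2)] ts(1) by simp
  ultimately show ?thesis
    using \<open>set es \<subseteq> T\<close> that by blast
qed

lemma order_0_le_if_span_has_smaller_orders:
  fixes u v :: "'a::field_char_0" and \<alpha> \<beta> :: "'i \<Rightarrow> nat"
  defines "f \<equiv> \<lambda>t. [:0, 1:] ^ \<alpha> t * [:v, u:] ^ \<beta> t"
  assumes u: "u \<noteq> 0" and v: "v \<noteq> 0" and "finite T"
    and P: "P \<in> poly_vs.span (insert (f j) (f ` T))" "P \<noteq> 0"
    and smaller: "\<forall>R \<in> poly_vs.span (f ` T). R \<noteq> 0 \<longrightarrow> order 0 R < order 0 P"
  shows "order 0 P \<le> \<alpha> j + (card T + 1 choose 2)"
proof -
  obtain es where "set es \<subseteq> T" and "length es \<le> card T"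
    and T_span: "f ` T \<subseteq> poly_vs.span (f ` set es)"
    and W_P_nonzero: "euler_wronskian (P # map f es) \<noteq> 0"
    by (rule exists_subfamily_with_nonzero_euler_wronskian[OF \<open>finite T\<close> P(2) smaller])
  have "poly_vs.span (f ` set es) \<subseteq> poly_vs.span (set (map f (j # es)))"
    by (intro poly_vs.span_mono) auto
  moreover have "f j \<in> poly_vs.span (set (map f (j # es)))"
    by (simp add: poly_vs.span_base)
  ultimately have "insert (f j) (f ` T) \<subseteq> poly_vs.span (set (map f (j # es)))"
    using T_span by blast
  then have "poly_vs.span (insert (f j) (f ` T)) \<subseteq> poly_vs.span (set (map f (j # es)))"
    by (rule span_subset_span)
  then have "set (P # map f es) \<subseteq> poly_vs.span (set (map f (j # es)))"
    using P(1) poly_vs.span_superset[of "set (map f (j # es))"] by auto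
  then obtain c where "euler_wronskian (P # map f es) = smult c (euler_wronskian (map f (j # es)))"
    using euler_wronskian_change_of_basis[of "P # map f es" "map f (j # es)"] by auto
  then have "order 0 (euler_wronskian (P # map f es)) = order 0 (euler_wronskian (map f (j # es)))"
    and W_f_nonzero: "euler_wronskian (map f (j # es)) \<noteq> 0"
    using W_P_nonzero by (auto simp: order_smult)
  moreover have "order 0 (f t) = \<alpha> t" for t
    using order_0_pX_power_mult[of "[:v, u:] ^ \<beta> t" "\<alpha> t"] v by (simp add: f_def)
  ultimately have "order 0 P + sum_list (map \<alpha> es) \<le> order 0 (euler_wronskian (map f (j # es)))"
    using sum_order_0_le_order_0_euler_wronskian[OF W_P_nonzero] by (simp add: o_def)
  also have "\<dots> \<le> sum_list (map \<alpha> (j # es)) + (length (j # es) choose 2)"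
    using order_0_euler_wronskian_le[OF u v, of \<alpha> \<beta> "j # es"] W_f_nonzero by (simp add: f_def)
  also have "\<dots> \<le> \<alpha> j + sum_list (map \<alpha> es) + (card T + 1 choose 2)"
    using binomial_right_mono[of "Suc (length es)" "card T + 1" 2] \<open>length es \<le> card T\<close> by simp
  finally show ?thesis
    by simp
qed

lemma order_0_le_Max_of_span:
  fixes u v :: "'a::field_char_0" and \<alpha> \<beta> :: "nat \<Rightarrow> nat"
  defines "f \<equiv> \<lambda>t. [:0, 1:] ^ \<alpha> t * [:v, u:] ^ \<beta> t"
  assumes u: "u \<noteq> 0" and v: "v \<noteq> 0"
  shows "P \<in> poly_vs.span (f ` {j..l}) \<Longrightarrow> P \<noteq> 0 \<Longrightarrow>
    order 0 P \<le> Max ((\<lambda>t. \<alpha> t + (l + 1 - t choose 2)) ` {j..l})"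
proof (induction "Suc l - j" arbitrary: j P)
  case 0
  then show ?case
    by simp
next
  case (Suc n)
  let ?M = "\<lambda>j. Max ((\<lambda>t. \<alpha> t + (l + 1 - t choose 2)) ` {j..l})"
  have "j \<le> l"
    using Suc.hyps(2) by simp
  show ?case
  proof (cases "\<exists>R \<in> poly_vs.span (f ` {Suc j..l}). R \<noteq> 0 \<and> order 0 P \<le> order 0 R")
    case True
    then obtain R where R: "R \<in> poly_vs.span (f ` {Suc j..l})" "R \<noteq> 0" "order 0 P \<le> order 0 R"
      by blast
    then have "{Suc j..l} \<noteq> {}"
      by (cases "Suc j \<le> l") auto
    have "n = Suc l - Suc j"
      using Suc.hyps(2) by simp
    then have "order 0 R \<le> ?M (Suc j)"
      using Suc.hyps(1) R(1,2) by blast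
    also have "\<dots> \<le> ?M j"
      using \<open>{Suc j..l} \<noteq> {}\<close> by (intro Max_mono) auto
    finally show ?thesis
      using R(3) by simp
  next
    case False
    have "f ` {j..l} = insert (f j) (f ` {Suc j..l})"
      using \<open>j \<le> l\<close> by (auto simp: Icc_eq_insert_lb_nat)
    then have "order 0 P \<le> \<alpha> j + (card {Suc j..l} + 1 choose 2)"
      using False Suc.prems unfolding f_def
      by (intro order_0_le_if_span_has_smaller_orders[OF u v]) auto
    also have "\<dots> \<le> ?M j"
      using \<open>j \<le> l\<close> by (intro Max_ge) (auto simp: Suc_diff_le)
    finally show ?thesis .
  qed
qed

theorem theorem2p1:
  fixes u v :: "'a::field_char_0"
    and a :: "nat \<Rightarrow> 'a"
    and alpha beta :: "nat \<Rightarrow> nat"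
    and l :: nat
  assumes "u * v \<noteq> 0"
    and "\<And>i j. 1 \<le> i \<Longrightarrow> i \<le> j \<Longrightarrow> j \<le> l \<Longrightarrow> alpha i \<le> alpha j"
    and "(\<Sum>j = 1..l. smult (a j) ([:0, 1:] ^ alpha j * [:v, u:] ^ beta j)) \<noteq> 0"
  shows "val (\<Sum>j = 1..l. smult (a j) ([:0, 1:] ^ alpha j * [:v, u:] ^ beta j))
           \<le> Max ((\<lambda>j. alpha j + ((l + 1 - j) choose 2)) ` {1..l})"
proof -
  let ?P = "\<Sum>j = 1..l. smult (a j) ([:0, 1:] ^ alpha j * [:v, u:] ^ beta j)"
  have "u \<noteq> 0" and "v \<noteq> 0"
    using assms(1) by simp_all
  moreover have "?P \<in> poly_vs.span ((\<lambda>t. [:0, 1:] ^ alpha t * [:v, u:] ^ beta t) ` {1..l})"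
    by (intro poly_vs.span_sum poly_vs.span_scale poly_vs.span_base) simp
  ultimately have "order 0 ?P \<le> Max ((\<lambda>j. alpha j + ((l + 1 - j) choose 2)) ` {1..l})"
    using assms(3) by (rule order_0_le_Max_of_span)
  then show ?thesis
    using assms(3) by (simp add: val_eq_order_0)
qed

end
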